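(* Let $F$ be $L$-periodic and infinitely differentiable. Then for every fixed $i\ge1$ and $j\ge1$, $$I\big(c^{(N)}_{ij}\big)=\limsup_{N\to\infty}\frac{\ln|c^{(N)}_{ij}|}{\ln N}\le\frac{j-1}{2}.$$
   Context: Let $N\ge2$, $L>0$, $\Delta=L/N$, $x_i=(i-1)L/N$, indices modulo $N$. Discrete derivatives act on the index $i$: $(\nabla^+g)(i)=g(i+1)-g(i)$, $(\nabla^-g)(i)=g(i)-g(i-1)$. Let $d_m=(-1)^m(m+1)$. Define $c^{(N)}_{i1}=F(x_i)$, $c^{(N)}_{i2}=0$, and for $j\ge3$ $$c_{ij}=-\sum_{m=1}^{\lfloor (j-1)/2\rfloor}\ \sum_{j_1+\dots+j_m=j-m-1}\frac{d_m}{j}\Delta^{-2-m}\,\nabla^-\!\Big(\prod_{p=1}^m\frac{\nabla^+c_{i,j_p}}{j_p+1}\Big)+\sum_{k=1}^{\lfloor (j-1)/2\rfloor}\ \sum_{j_1+\dots+j_k=j-k-1}\frac{1}{j\,k!}F^{(k)}(x_i)\prod_{p=1}^k\frac{c_{i,j_p}}{j_p+1},$$ inner sums over ordered tuples of positive integers. (These are the Taylor coefficients at $t=0$ of the velocities $v_i$ for the system $\ddot x_i=(x_i-x_{i-1})^{-2}-(x_{i+1}-x_i)^{-2}+F(x_i)$ on the circle of length $L$ with $x_i(0)=(i-1)L/N$, $\dot x_i(0)=0$.) *)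

theory Defs
  imports "HOL-Analysis.Analysis"
begin

definition smooth_real :: "(real \<Rightarrow> real) \<Rightarrow> bool" where
  "smooth_real F \<longleftrightarrow> (\<forall>k x. ((deriv ^^ k) F) differentiable (at x))"

definition xpt :: "real \<Rightarrow> nat \<Rightarrow> int \<Rightarrow> real" where
  "xpt L N i = real_of_int ((i - 1) mod int N) * L / real N"

definition nabla_plus :: "(int \<Rightarrow> real) \<Rightarrow> int \<Rightarrow> real" where
  "nabla_plus g i = g (i + 1) - g i"

definition nabla_minus :: "(int \<Rightarrow> real) \<Rightarrow> int \<Rightarrow> real" where
  "nabla_minus g i = g i - g (i - 1)"

definition dcoef :: "nat \<Rightarrow> real" where
  "dcoef m = (-1) ^ m * (real m + 1)"

definition tuples :: "nat \<Rightarrow> nat \<Rightarrow> nat list set" where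
  "tuples m s = {js. length js = m \<and> (\<forall>p\<in>set js. 0 < p) \<and> sum_list js = s}"

text \<open>One step of the recursion: computes c_{.,j} from the previously computed
  columns g j' (j' < j). Index j = 0 is unused.\<close>
definition cstep :: "(real \<Rightarrow> real) \<Rightarrow> real \<Rightarrow> nat \<Rightarrow> nat \<Rightarrow> (nat \<Rightarrow> int \<Rightarrow> real) \<Rightarrow> int \<Rightarrow> real" where
  "cstep F L N j g i =
    (if j = 0 then 0
     else if j = 1 then F (xpt L N i)
     else if j = 2 then 0
     else
       - (\<Sum>m = 1..(j - 1) div 2. \<Sum>js \<in> tuples m (j - m - 1).
            dcoef m / real j * (L / real N) powi (- 2 - int m) *
            nabla_minus (\<lambda>i'. \<Prod>p<m. nabla_plus (g (js ! p)) i' / (real (js ! p) + 1)) i)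
       + (\<Sum>k = 1..(j - 1) div 2. \<Sum>js \<in> tuples k (j - k - 1).
            1 / (real j * fact k) * (deriv ^^ k) F (xpt L N i) *
            (\<Prod>p<k. g (js ! p) i / (real (js ! p) + 1))))"

primrec ctab :: "(real \<Rightarrow> real) \<Rightarrow> real \<Rightarrow> nat \<Rightarrow> nat \<Rightarrow> nat \<Rightarrow> int \<Rightarrow> real" where
  "ctab F L N 0 = (\<lambda>_ _. 0)"
| "ctab F L N (Suc n) = (ctab F L N n)(n := cstep F L N n (ctab F L N n))"

definition ccoef :: "(real \<Rightarrow> real) \<Rightarrow> real \<Rightarrow> nat \<Rightarrow> int \<Rightarrow> nat \<Rightarrow> real" where
  "ccoef F L N i j = ctab F L N (Suc j) j i"

end

theory Submission
  imports Defs
begin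

(* The proof is an induction on the column index j, carried by a notion of "order" for
   families of grid functions g N : int => real.  A family has order a if, for every s,
   its s-th forward difference is O(N^(a - s)) uniformly in the grid index.  Differences
   thus gain a factor 1/N each, so taking a difference lowers the order by one.

   1. The order calculus: orders add under pointwise products (discrete Leibniz rule),
      are preserved by sums, shifts and constant factors, and grow by e under an
      N-dependent factor of size O(N^e).
   2. Samples of a smooth L-periodic function on the grid x_i = (i-1)L/N have order 0:
      the s-th difference is an s-fold finite difference of step L/N, bounded by the
      mean value theorem by (L/N)^s sup |G^(s)|, and derivatives of periodic continuous
      functions are bounded.
   3. Every term of the recursion for column j has order at most (j-1)/2, hence so
      has column j itself (strong induction on j).
   4. A family of order a >= 0 is O(N^a), which bounds the limsup of ln|c|/ln N by a. *)


section \<open>Forward differences of grid functions\<close>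

lemma nablas_add:
  "(nabla_plus ^^ s) (\<lambda>i. u i + v i) = (\<lambda>i. (nabla_plus ^^ s) u i + (nabla_plus ^^ s) v i)"
  by (induction s) (auto simp: nabla_plus_def)

lemma nablas_scale: "(nabla_plus ^^ s) (\<lambda>i. c * v i) = (\<lambda>i. c * (nabla_plus ^^ s) v i)"
  by (induction s) (auto simp: nabla_plus_def algebra_simps)

lemma nablas_shift: "(nabla_plus ^^ s) (\<lambda>i. v (i + d)) = (\<lambda>i. (nabla_plus ^^ s) v (i + d))"
  by (induction s) (auto simp: nabla_plus_def algebra_simps)

lemma nablas_const: "(nabla_plus ^^ s) (\<lambda>i. c) = (\<lambda>i. if s = 0 then c else 0)"
  by (induction s) (auto simp: nabla_plus_def)

lemma nabla_mult:
  "nabla_plus (\<lambda>i. u i * v i) = (\<lambda>i. u (i + 1) * nabla_plus v i + nabla_plus u i * v i)"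
  by (auto simp: nabla_plus_def fun_eq_iff algebra_simps)

lemma nabla_minus_shift: "nabla_minus u = (\<lambda>i. nabla_plus u (i + (-1)))"
  by (auto simp: nabla_plus_def nabla_minus_def fun_eq_iff)


section \<open>Orders of families of grid functions\<close>

definition diff_bound :: "nat \<Rightarrow> real \<Rightarrow> (nat \<Rightarrow> int \<Rightarrow> real) \<Rightarrow> bool" where
  "diff_bound s a g \<longleftrightarrow>
     (\<exists>C. \<forall>N\<ge>1. \<forall>i. \<bar>(nabla_plus ^^ s) (g N) i\<bar> \<le> C * real N powr (a - real s))"

definition grid_order :: "real \<Rightarrow> (nat \<Rightarrow> int \<Rightarrow> real) \<Rightarrow> bool" where
  "grid_order a g \<longleftrightarrow> (\<forall>s. diff_bound s a g)"

lemma diff_bound_add: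
  assumes "diff_bound s a g" and "diff_bound s a h"
  shows "diff_bound s a (\<lambda>N i. g N i + h N i)"
proof -
  obtain C1 C2 where
    C1: "\<forall>N\<ge>1. \<forall>i. \<bar>(nabla_plus ^^ s) (g N) i\<bar> \<le> C1 * real N powr (a - real s)" and
    C2: "\<forall>N\<ge>1. \<forall>i. \<bar>(nabla_plus ^^ s) (h N) i\<bar> \<le> C2 * real N powr (a - real s)"
    using assms unfolding diff_bound_def by blast
  have "\<bar>(nabla_plus ^^ s) (\<lambda>i. g N i + h N i) i\<bar> \<le> (C1 + C2) * real N powr (a - real s)"
    if "N \<ge> 1" for N i
  proof -
    have "\<bar>(nabla_plus ^^ s) (\<lambda>i. g N i + h N i) i\<bar>
          \<le> \<bar>(nabla_plus ^^ s) (g N) i\<bar> + \<bar>(nabla_plus ^^ s) (h N) i\<bar>"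
      unfolding nablas_add by (rule abs_triangle_ineq)
    also have "\<dots> \<le> C1 * real N powr (a - real s) + C2 * real N powr (a - real s)"
      using C1 C2 that by (intro add_mono) auto
    finally show ?thesis by (simp add: distrib_right)
  qed
  then show ?thesis unfolding diff_bound_def by blast
qed

lemma diff_bound_scale:
  assumes c: "\<forall>N\<ge>1. \<bar>c N\<bar> \<le> K * real N powr e" and g: "diff_bound s a g"
  shows "diff_bound s (a + e) (\<lambda>N i. c N * g N i)"
proof -
  from g obtain C where C: "\<forall>N\<ge>1. \<forall>i. \<bar>(nabla_plus ^^ s) (g N) i\<bar> \<le> C * real N powr (a - real s)"
    unfolding diff_bound_def by blast
  have "\<bar>(nabla_plus ^^ s) (\<lambda>i. c N * g N i) i\<bar> \<le> (K * C) * real N powr (a + e - real s)"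
    if N: "N \<ge> 1" for N i
  proof -
    have "\<bar>(nabla_plus ^^ s) (\<lambda>i. c N * g N i) i\<bar> = \<bar>c N\<bar> * \<bar>(nabla_plus ^^ s) (g N) i\<bar>"
      by (simp add: nablas_scale abs_mult)
    also have "\<dots> \<le> (K * real N powr e) * (C * real N powr (a - real s))"
      using c C N by (intro mult_mono) auto
    also have "\<dots> = (K * C) * real N powr (a + e - real s)"
      using N by (simp add: powr_add[symmetric] algebra_simps)
    finally show ?thesis .
  qed
  then show ?thesis unfolding diff_bound_def by blast
qed

lemma diff_bound_shift: "diff_bound s a g \<Longrightarrow> diff_bound s a (\<lambda>N i. g N (i + d))"
  unfolding diff_bound_def nablas_shift by blast

lemma diff_bound_Suc: "diff_bound (Suc s) a g \<longleftrightarrow> diff_bound s (a - 1) (\<lambda>N. nabla_plus (g N))"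
  unfolding diff_bound_def funpow_Suc_right by (simp add: algebra_simps)

lemma diff_bound_mono:
  assumes "a \<le> b" and "diff_bound s a g"
  shows "diff_bound s b g"
proof -
  obtain C where C: "\<forall>N\<ge>1. \<forall>i. \<bar>(nabla_plus ^^ s) (g N) i\<bar> \<le> C * real N powr (a - real s)"
    using assms(2) unfolding diff_bound_def by blast
  have "\<bar>(nabla_plus ^^ s) (g N) i\<bar> \<le> \<bar>C\<bar> * real N powr (b - real s)" if N: "N \<ge> 1" for N i
  proof -
    have "\<bar>(nabla_plus ^^ s) (g N) i\<bar> \<le> C * real N powr (a - real s)"
      using C N by blast
    also have "\<dots> \<le> \<bar>C\<bar> * real N powr (a - real s)"
      by (intro mult_right_mono) auto
    also have "\<dots> \<le> \<bar>C\<bar> * real N powr (b - real s)"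
      using N assms(1) by (intro mult_left_mono powr_mono) auto
    finally show ?thesis .
  qed
  then show ?thesis unfolding diff_bound_def by blast
qed

lemma diff_bound_mult:
  assumes "\<forall>s\<le>r. diff_bound s a g" and "\<forall>s\<le>r. diff_bound s b h"
  shows "diff_bound r (a + b) (\<lambda>N i. g N i * h N i)"
  using assms
proof (induction r arbitrary: a b g h)
  case 0
  then obtain C1 C2 where C1: "\<forall>N\<ge>1. \<forall>i. \<bar>g N i\<bar> \<le> C1 * real N powr a"
    and C2: "\<forall>N\<ge>1. \<forall>i. \<bar>h N i\<bar> \<le> C2 * real N powr b"
    unfolding diff_bound_def by auto
  have "\<bar>g N i * h N i\<bar> \<le> (C1 * C2) * real N powr (a + b)" if N: "N \<ge> 1" for N i
  proof -
    have g: "\<bar>g N i\<bar> \<le> C1 * real N powr a" and h: "\<bar>h N i\<bar> \<le> C2 * real N powr b"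
      using C1 C2 N by auto
    have "\<bar>g N i * h N i\<bar> \<le> (C1 * real N powr a) * (C2 * real N powr b)"
      unfolding abs_mult using g h by (intro mult_mono) (auto intro: order_trans[OF abs_ge_zero])
    also have "\<dots> = (C1 * C2) * real N powr (a + b)" using N by (simp add: powr_add)
    finally show ?thesis .
  qed
  then show ?case unfolding diff_bound_def by auto
next
  case (Suc r)
  have "diff_bound r (a + (b - 1)) (\<lambda>N i. g N (i + 1) * nabla_plus (h N) i)"
    using Suc.prems by (intro Suc.IH) (auto simp: diff_bound_shift simp flip: diff_bound_Suc)
  moreover have "diff_bound r (a - 1 + b) (\<lambda>N i. nabla_plus (g N) i * h N i)"
    using Suc.prems by (intro Suc.IH) (auto simp flip: diff_bound_Suc)
  ultimately have "diff_bound r (a + b - 1) (\<lambda>N. nabla_plus (\<lambda>i. g N i * h N i))"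
    unfolding nabla_mult by (simp add: diff_bound_add algebra_simps)
  then show ?case using diff_bound_Suc by blast
qed

lemma grid_order_mono: "a \<le> b \<Longrightarrow> grid_order a g \<Longrightarrow> grid_order b g"
  unfolding grid_order_def using diff_bound_mono by blast

lemma grid_order_add: "grid_order a g \<Longrightarrow> grid_order a h \<Longrightarrow> grid_order a (\<lambda>N i. g N i + h N i)"
  unfolding grid_order_def using diff_bound_add by blast

lemma grid_order_scale:
  "\<forall>N\<ge>1. \<bar>c N\<bar> \<le> K * real N powr e \<Longrightarrow> grid_order a g \<Longrightarrow> grid_order (a + e) (\<lambda>N i. c N * g N i)"
  unfolding grid_order_def using diff_bound_scale by blast

lemma grid_order_cmult: "grid_order a g \<Longrightarrow> grid_order a (\<lambda>N i. c * g N i)"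
  using grid_order_scale[of "\<lambda>_. c" "\<bar>c\<bar>" 0 a g] by simp

lemma grid_order_divide: "grid_order a g \<Longrightarrow> grid_order a (\<lambda>N i. g N i / c)"
  using grid_order_cmult[of a g "1 / c"] by simp

lemma grid_order_neg: "grid_order a g \<Longrightarrow> grid_order a (\<lambda>N i. - g N i)"
  using grid_order_cmult[of a g "-1"] by simp

lemma grid_order_nabla_plus: "grid_order a g \<Longrightarrow> grid_order (a - 1) (\<lambda>N. nabla_plus (g N))"
  unfolding grid_order_def using diff_bound_Suc by blast

lemma grid_order_nabla_minus: "grid_order a g \<Longrightarrow> grid_order (a - 1) (\<lambda>N. nabla_minus (g N))"
  unfolding nabla_minus_shift grid_order_def
  using diff_bound_shift diff_bound_Suc by blast

lemma grid_order_zero: "grid_order a (\<lambda>N i. 0)"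
  unfolding grid_order_def diff_bound_def nablas_const by (intro allI exI[of _ 0]) simp

lemma grid_order_one: "grid_order 0 (\<lambda>N i. 1)"
  unfolding grid_order_def diff_bound_def nablas_const
  by (intro allI exI[of _ 1]) (simp add: powr_mono2')

lemma grid_order_mult:
  "grid_order a g \<Longrightarrow> grid_order b h \<Longrightarrow> grid_order (a + b) (\<lambda>N i. g N i * h N i)"
  unfolding grid_order_def using diff_bound_mult by blast

lemma grid_order_prod:
  fixes m :: nat
  assumes "\<And>p. p < m \<Longrightarrow> grid_order (a p) (f p)"
  shows "grid_order (\<Sum>p<m. a p) (\<lambda>N i. \<Prod>p<m. f p N i)"
  using assms
proof (induction m)
  case 0 then show ?case using grid_order_one by simp
next
  case (Suc m)
  then show ?case using grid_order_mult[of "\<Sum>p<m. a p" _ "a m" "f m"] by simp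
qed

lemma grid_order_sum:
  assumes "\<And>x. x \<in> A \<Longrightarrow> grid_order a (f x)"
  shows "grid_order a (\<lambda>N i. \<Sum>x\<in>A. f x N i)"
proof (cases "finite A")
  case True
  then show ?thesis using assms
  proof (induction A rule: finite_induct)
    case empty then show ?case using grid_order_zero by simp
  next
    case (insert x A)
    then show ?case using grid_order_add[of a "f x" "\<lambda>N i. \<Sum>x\<in>A. f x N i"] by simp
  qed
next
  case False then show ?thesis using grid_order_zero by simp
qed

lemma grid_order_bound:
  assumes "grid_order a g"
  obtains C where "\<forall>N\<ge>1. \<forall>i. \<bar>g N i\<bar> \<le> C * real N powr a"
  using assms unfolding grid_order_def diff_bound_def by (metis funpow_0 of_nat_0 diff_zero)


section \<open>Samples of smooth periodic functions\<close>

fun fwd_diff :: "real \<Rightarrow> nat \<Rightarrow> (real \<Rightarrow> real) \<Rightarrow> real \<Rightarrow> real" where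
  "fwd_diff h 0 G x = G x"
| "fwd_diff h (Suc s) G x = fwd_diff h s G (x + h) - fwd_diff h s G x"

lemma fwd_diff_DERIV:
  assumes "\<And>x. DERIV G x :> G' x"
  shows "DERIV (fwd_diff h s G) x :> fwd_diff h s G' x"
proof (induction s arbitrary: x)
  case 0 then show ?case using assms by simp
next
  case (Suc s)
  have "DERIV (\<lambda>y. fwd_diff h s G (y + h)) x :> fwd_diff h s G' (x + h)"
    using Suc DERIV_shift[of "fwd_diff h s G" "fwd_diff h s G' (x + h)" x h] by simp
  then have "DERIV (\<lambda>y. fwd_diff h s G (y + h) - fwd_diff h s G y) x
               :> fwd_diff h s G' (x + h) - fwd_diff h s G' x"
    using Suc by (intro derivative_intros)
  then show ?case by simp
qed

lemma fwd_diff_bound: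
  assumes "\<forall>k x. DERIV ((deriv ^^ k) G) x :> (deriv ^^ Suc k) G x"
    and "\<forall>y. \<bar>(deriv ^^ s) G y\<bar> \<le> M" and "h \<ge> 0"
  shows "\<bar>fwd_diff h s G x\<bar> \<le> h ^ s * M"
  using assms(1,2)
proof (induction s arbitrary: G x)
  case 0 then show ?case by simp
next
  case (Suc s)
  have derivs: "(deriv ^^ Suc k) G = (deriv ^^ k) (deriv G)" for k
    by (metis comp_apply funpow_Suc_right)
  have "\<forall>k x. DERIV ((deriv ^^ k) (deriv G)) x :> (deriv ^^ Suc k) (deriv G) x"
    using Suc.prems(1) by (metis derivs)
  moreover have "\<forall>y. \<bar>(deriv ^^ s) (deriv G) y\<bar> \<le> M"
    using Suc.prems(2) by (metis derivs)
  ultimately have IH: "\<bar>fwd_diff h s (deriv G) z\<bar> \<le> h ^ s * M" for z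
    by (rule Suc.IH)
  have "DERIV G y :> deriv G y" for y using Suc.prems(1)[rule_format, of 0] by simp
  then have D: "DERIV (fwd_diff h s G) y :> fwd_diff h s (deriv G) y" for y
    by (rule fwd_diff_DERIV)
  show ?case
  proof (cases "h = 0")
    case True then show ?thesis by simp
  next
    case False
    then obtain z where "fwd_diff h s G (x + h) - fwd_diff h s G x = h * fwd_diff h s (deriv G) z"
      using MVT2[of x "x + h" "fwd_diff h s G"] D assms(3) by fastforce
    then have "\<bar>fwd_diff h (Suc s) G x\<bar> = h * \<bar>fwd_diff h s (deriv G) z\<bar>"
      using assms(3) by (simp add: abs_mult)
    also have "\<dots> \<le> h * (h ^ s * M)" using IH assms(3) by (intro mult_left_mono) auto
    finally show ?thesis by simp
  qed
qed

lemma periodic_int: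
  assumes "\<forall>x. A (x + L) = A (x::real)"
  shows "A (x + real_of_int k * L) = A x"
proof -
  have nat: "A (y + real n * L) = A y" for y n
    by (induction n) (auto simp: algebra_simps assms[rule_format, of "y + real _ * L", simplified algebra_simps])
  show ?thesis
  proof (cases "k \<ge> 0")
    case True then show ?thesis using nat[of x "nat k"] by simp
  next
    case False
    then have cancel: "(x + real_of_int k * L) + real (nat (- k)) * L = x" by (simp add: algebra_simps)
    show ?thesis using nat[of "x + real_of_int k * L" "nat (-k)"] unfolding cancel by simp
  qed
qed

text \<open>A continuous periodic function is bounded: it is bounded on one period [0, L].\<close>
lemma periodic_bounded:
  fixes A :: "real \<Rightarrow> real"
  assumes per: "\<forall>x. A (x + L) = A x" and cont: "\<forall>x. isCont A x" and L: "L > 0"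
  obtains M where "\<forall>y. \<bar>A y\<bar> \<le> M"
proof -
  obtain M where M: "\<forall>x. 0 \<le> x \<and> x \<le> L \<longrightarrow> \<bar>A x\<bar> \<le> M"
    using isCont_bounded[where a=0 and b=L and f="\<lambda>x. \<bar>A x\<bar>"] cont L
    by (auto intro: continuous_intros)
  have "\<bar>A y\<bar> \<le> M" for y
  proof -
    define k where "k = \<lfloor>y / L\<rfloor>"
    have "real_of_int k \<le> y / L" "y / L < real_of_int k + 1" unfolding k_def by linarith+
    then have "real_of_int k * L \<le> y" "y < real_of_int k * L + L"
      using L by (auto simp: field_simps)
    then have "\<bar>A (y + real_of_int (-k) * L)\<bar> \<le> M" using M by auto
    then show ?thesis using periodic_int[OF per] by metis
  qed
  then show ?thesis using that by blast
qed

lemma derivs_periodic: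
  assumes per: "\<forall>x. G (x + L) = G (x::real)" and sm: "\<forall>k x. ((deriv ^^ k) G) differentiable (at x)"
  shows "\<forall>x. (deriv ^^ k) G (x + L) = (deriv ^^ k) G x"
proof (induction k)
  case 0 then show ?case using per by simp
next
  case (Suc k)
  have "deriv ((deriv ^^ k) G) (x + L) = deriv ((deriv ^^ k) G) x" for x
  proof -
    have "DERIV ((deriv ^^ k) G) (x + L) :> deriv ((deriv ^^ k) G) (x + L)"
      using sm DERIV_deriv_iff_real_differentiable by blast
    then have "DERIV (\<lambda>y. (deriv ^^ k) G (y + L)) x :> deriv ((deriv ^^ k) G) (x + L)"
      using DERIV_shift by blast
    then have "DERIV ((deriv ^^ k) G) x :> deriv ((deriv ^^ k) G) (x + L)"
      using Suc by simp
    then show ?thesis by (simp add: DERIV_imp_deriv)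
  qed
  then show ?case by simp
qed

lemma xpt_periodic:
  assumes per: "\<forall>x. A (x + L) = A (x::real)" and N: "N \<ge> 1"
  shows "A (xpt L N i) = A (real_of_int (i - 1) * (L / real N))"
proof -
  define q where "q = (i - 1) div int N"
  have "(i - 1) mod int N = (i - 1) - int N * q"
    unfolding q_def by (simp add: minus_div_mult_eq_mod[symmetric] algebra_simps)
  then have "xpt L N i = (real_of_int (i - 1) - real N * real_of_int q) * (L / real N)"
    unfolding xpt_def by simp
  also have "\<dots> = real_of_int (i - 1) * (L / real N) + real_of_int (-q) * L"
    using N by (simp add: field_simps)
  finally show ?thesis using periodic_int[OF per] by metis
qed

lemma nablas_sample:
  "(nabla_plus ^^ s) (\<lambda>i. G (real_of_int (i - 1) * h)) i = fwd_diff h s G (real_of_int (i - 1) * h)"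
proof (induction s arbitrary: i)
  case 0 then show ?case by simp
next
  case (Suc s)
  have "real_of_int (i + 1 - 1) * h = real_of_int (i - 1) * h + h" by (simp add: algebra_simps)
  then show ?case using Suc by (simp add: nabla_plus_def)
qed

lemma grid_order_sample:
  assumes L: "L > 0" and per: "\<forall>x. G (x + L) = G x"
    and sm: "\<forall>k x. ((deriv ^^ k) G) differentiable (at x)"
  shows "grid_order 0 (\<lambda>N i. G (xpt L N i))"
  unfolding grid_order_def diff_bound_def
proof
  fix s
  have hd: "\<forall>k x. DERIV ((deriv ^^ k) G) x :> (deriv ^^ Suc k) G x"
    using sm DERIV_deriv_iff_real_differentiable by simp
  have "\<forall>x. isCont ((deriv ^^ s) G) x" using sm differentiable_imp_continuous_within by blast
  then obtain M where M: "\<forall>y. \<bar>(deriv ^^ s) G y\<bar> \<le> M"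
    using periodic_bounded[OF derivs_periodic[OF per sm] _ L] by blast
  have "\<bar>(nabla_plus ^^ s) (\<lambda>i. G (xpt L N i)) i\<bar> \<le> (L ^ s * M) * real N powr (0 - real s)"
    if N: "N \<ge> 1" for N i
  proof -
    have "(\<lambda>i. G (xpt L N i)) = (\<lambda>i. G (real_of_int (i - 1) * (L / real N)))"
      using xpt_periodic[OF per N] by auto
    then have "\<bar>(nabla_plus ^^ s) (\<lambda>i. G (xpt L N i)) i\<bar>
               = \<bar>fwd_diff (L / real N) s G (real_of_int (i - 1) * (L / real N))\<bar>"
      by (simp only: nablas_sample)
    also have "\<dots> \<le> (L / real N) ^ s * M" using fwd_diff_bound[OF hd M] L by simp
    also have "\<dots> = (L ^ s * M) * real N powr (0 - real s)"
      using N by (simp add: powr_minus powr_realpow power_divide divide_simps)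
    finally show ?thesis .
  qed
  then show "\<exists>C. \<forall>N\<ge>1. \<forall>i. \<bar>(nabla_plus ^^ s) (\<lambda>i. G (xpt L N i)) i\<bar> \<le> C * real N powr (0 - real s)"
    by blast
qed

lemma grid_order_sample_deriv:
  assumes L: "L > 0" and per: "\<forall>x. F (x + L) = F x" and sm: "smooth_real F"
  shows "grid_order 0 (\<lambda>N i. (deriv ^^ k) F (xpt L N i))"
proof (rule grid_order_sample[OF L])
  have sm': "\<forall>k x. ((deriv ^^ k) F) differentiable (at x)" using sm unfolding smooth_real_def by blast
  show "\<forall>x. (deriv ^^ k) F (x + L) = (deriv ^^ k) F x" using derivs_periodic[OF per sm'] by blast
  show "\<forall>k' x. (deriv ^^ k') ((deriv ^^ k) F) differentiable at x"
    using sm' by (metis comp_apply funpow_add)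
qed

lemma grid_step_powi_bound:
  assumes L: "L > 0"
  shows "\<forall>N\<ge>1. \<bar>c * (L / real N) powi (- 2 - int m)\<bar> \<le> (\<bar>c\<bar> / L ^ (m + 2)) * real N powr real (m + 2)"
proof (intro allI impI)
  fix N :: nat assume N: "1 \<le> N"
  have "(L / real N) powi (- 2 - int m) = (L / real N) powi (- int (m + 2))" by simp
  also have "\<dots> = inverse ((L / real N) ^ (m + 2))" by (simp only: power_int_minus power_int_of_nat)
  also have "\<dots> = real N ^ (m + 2) / L ^ (m + 2)" by (simp add: power_divide)
  also have "\<dots> = real N powr real (m + 2) / L ^ (m + 2)"
    using N by (subst powr_realpow) auto
  finally show "\<bar>c * (L / real N) powi (- 2 - int m)\<bar> \<le> (\<bar>c\<bar> / L ^ (m + 2)) * real N powr real (m + 2)"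
    using L by (simp add: abs_mult)
qed


section \<open>The columns of the coefficient table\<close>

definition column :: "(real \<Rightarrow> real) \<Rightarrow> real \<Rightarrow> nat \<Rightarrow> nat \<Rightarrow> int \<Rightarrow> real" where
  "column F L j N = ctab F L N (Suc j) j"

lemma ctab_column: "j' < n \<Longrightarrow> ctab F L N n j' = column F L j' N"
proof (induction n)
  case 0 then show ?case by simp
next
  case (Suc n) then show ?case unfolding column_def by (cases "j' = n") auto
qed

text \<open>Entries of a tuple are positive and bounded by its sum; this makes the
  recursion refer only to earlier columns.\<close>
lemma tuples_entry: "js \<in> tuples m s \<Longrightarrow> p < m \<Longrightarrow> 0 < js ! p \<and> js ! p \<le> s"
  unfolding tuples_def using member_le_sum_list[of "js ! p" js] by auto

lemma tuples_order_sum: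
  assumes "js \<in> tuples m s"
  shows "(\<Sum>p<m. (real (js ! p) - 1) / 2) = (real s - real m) / 2"
proof -
  have "length js = m" "sum_list js = s" using assms unfolding tuples_def by auto
  then have "(\<Sum>p<m. real (js ! p)) = real s"
    using sum_list_sum_nth[of js] by (simp add: atLeast0LessThan flip: of_nat_sum)
  then show ?thesis by (simp add: sum_subtractf sum_divide_distrib[symmetric])
qed

definition interaction_term ::
    "(real \<Rightarrow> real) \<Rightarrow> real \<Rightarrow> nat \<Rightarrow> nat \<Rightarrow> nat list \<Rightarrow> nat \<Rightarrow> int \<Rightarrow> real" where
  "interaction_term F L j m js N i = dcoef m / real j * (L / real N) powi (- 2 - int m) *
     nabla_minus (\<lambda>i'. \<Prod>p<m. nabla_plus (column F L (js ! p) N) i' / (real (js ! p) + 1)) i"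

definition force_term ::
    "(real \<Rightarrow> real) \<Rightarrow> real \<Rightarrow> nat \<Rightarrow> nat \<Rightarrow> nat list \<Rightarrow> nat \<Rightarrow> int \<Rightarrow> real" where
  "force_term F L j k js N i = 1 / (real j * fact k) * (deriv ^^ k) F (xpt L N i) *
     (\<Prod>p<k. column F L (js ! p) N i / (real (js ! p) + 1))"

lemma column_rec:
  assumes "j \<ge> 3"
  shows "column F L j N i =
      - (\<Sum>m = 1..(j - 1) div 2. \<Sum>js \<in> tuples m (j - m - 1). interaction_term F L j m js N i)
      + (\<Sum>k = 1..(j - 1) div 2. \<Sum>js \<in> tuples k (j - k - 1). force_term F L j k js N i)"
proof -
  have earlier: "ctab F L N j (js ! p) = column F L (js ! p) N"
    if "p < length js" "sum_list js < j" for js p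
    using that member_le_sum_list[of "js ! p" js] by (intro ctab_column) auto
  have "column F L j N i = cstep F L N j (ctab F L N j) i" unfolding column_def by simp
  then show ?thesis
    using assms unfolding cstep_def interaction_term_def force_term_def
    by (simp add: earlier tuples_def)
qed

lemma grid_order_interaction_term:
  assumes L: "L > 0"
    and IH: "\<And>j'. j' < j \<Longrightarrow> grid_order ((real j' - 1) / 2) (column F L j')"
    and m: "1 \<le> m" "2 * m \<le> j - 1" and js: "js \<in> tuples m (j - m - 1)"
  shows "grid_order ((real j - 1) / 2) (interaction_term F L j m js)"
proof -
  have "grid_order ((real (js ! p) - 1) / 2 - 1)
          (\<lambda>N i. nabla_plus (column F L (js ! p) N) i / (real (js ! p) + 1))" if "p < m" for p
    using tuples_entry[OF js that] m by (intro grid_order_divide grid_order_nabla_plus IH) auto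
  then have "grid_order (\<Sum>p<m. (real (js ! p) - 1) / 2 - 1)
               (\<lambda>N i. \<Prod>p<m. nabla_plus (column F L (js ! p) N) i / (real (js ! p) + 1))"
    by (rule grid_order_prod)
  then have term_order: "grid_order ((\<Sum>p<m. (real (js ! p) - 1) / 2 - 1) - 1 + real (m + 2))
               (interaction_term F L j m js)"
    unfolding interaction_term_def[abs_def]
    by (intro grid_order_scale[OF grid_step_powi_bound[OF L]] grid_order_nabla_minus)
  have "(\<Sum>p<m. (real (js ! p) - 1) / 2 - 1) = (real (j - m - 1) - real m) / 2 - real m"
    by (simp only: sum_subtractf tuples_order_sum[OF js]) simp
  then have exponent:
      "(\<Sum>p<m. (real (js ! p) - 1) / 2 - 1) - 1 + real (m + 2) = (real j + 1) / 2 - real m"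
    using m by (simp add: of_nat_diff field_simps)
  have "grid_order ((real j + 1) / 2 - real m) (interaction_term F L j m js)"
    using term_order unfolding exponent .
  moreover have "(real j + 1) / 2 - real m \<le> (real j - 1) / 2"
  proof -
    have "1 \<le> real m" using m by simp
    then show ?thesis by (simp add: field_simps)
  qed
  ultimately show ?thesis using grid_order_mono by blast
qed

lemma grid_order_force_term:
  assumes L: "L > 0" and per: "\<forall>x. F (x + L) = F x" and sm: "smooth_real F"
    and IH: "\<And>j'. j' < j \<Longrightarrow> grid_order ((real j' - 1) / 2) (column F L j')"
    and k: "1 \<le> k" "2 * k \<le> j - 1" and js: "js \<in> tuples k (j - k - 1)"
  shows "grid_order ((real j - 1) / 2) (force_term F L j k js)"
proof -
  have "grid_order ((real (js ! p) - 1) / 2) (\<lambda>N i. column F L (js ! p) N i / (real (js ! p) + 1))"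
    if "p < k" for p
    using tuples_entry[OF js that] k by (intro grid_order_divide IH) auto
  then have "grid_order (\<Sum>p<k. (real (js ! p) - 1) / 2)
               (\<lambda>N i. \<Prod>p<k. column F L (js ! p) N i / (real (js ! p) + 1))"
    by (rule grid_order_prod)
  then have "grid_order (0 + (\<Sum>p<k. (real (js ! p) - 1) / 2)) (force_term F L j k js)"
    unfolding force_term_def[abs_def]
    by (intro grid_order_mult grid_order_cmult grid_order_sample_deriv[OF L per sm])
  moreover have "0 + (\<Sum>p<k. (real (js ! p) - 1) / 2) = (real j - 1) / 2 - real k"
    using k by (simp add: tuples_order_sum[OF js] of_nat_diff field_simps)
  ultimately have "grid_order ((real j - 1) / 2 - real k) (force_term F L j k js)" by simp
  then show ?thesis by (rule grid_order_mono[rotated]) linarith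
qed

lemma grid_order_column:
  assumes L: "L > 0" and per: "\<forall>x. F (x + L) = F x" and sm: "smooth_real F"
  shows "grid_order ((real j - 1) / 2) (column F L j)"
proof (induction j rule: less_induct)
  case (less j)
  consider "j = 0 \<or> j = 2" | "j = 1" | "j \<ge> 3" by linarith
  then show ?case
  proof cases
    case 1
    then have "column F L j = (\<lambda>N i. 0)"
      unfolding column_def by (auto simp: fun_eq_iff cstep_def)
    then show ?thesis using grid_order_zero by simp
  next
    case 2
    then have "column F L j = (\<lambda>N i. (deriv ^^ 0) F (xpt L N i))"
      unfolding column_def by (auto simp: fun_eq_iff cstep_def)
    then show ?thesis using grid_order_sample_deriv[OF L per sm, of 0] 2 by simp
  next
    case 3
    have "grid_order ((real j - 1) / 2) (\<lambda>N i.
        - (\<Sum>m = 1..(j - 1) div 2. \<Sum>js \<in> tuples m (j - m - 1). interaction_term F L j m js N i)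
        + (\<Sum>k = 1..(j - 1) div 2. \<Sum>js \<in> tuples k (j - k - 1). force_term F L j k js N i))"
      using less.IH
      by (intro grid_order_add grid_order_neg grid_order_sum grid_order_interaction_term
          grid_order_force_term L per sm) auto
    then show ?thesis using column_rec[OF 3] by (simp add: fun_eq_iff)
  qed
qed


section \<open>From polynomial bounds to the growth index\<close>

lemma limsup_ln_ratio_bound:
  fixes c :: "nat \<Rightarrow> real"
  assumes bound: "\<forall>N\<ge>1. \<bar>c N\<bar> \<le> C * real N powr a" and a: "a \<ge> 0"
  shows "limsup (\<lambda>N. ereal (ln \<bar>c N\<bar> / ln (real N))) \<le> ereal a"
proof -
  define C' where "C' = max C 1"
  have C': "C' \<ge> 1" unfolding C'_def by simp
  have eventually_le:
    "eventually (\<lambda>N. ereal (ln \<bar>c N\<bar> / ln (real N)) \<le> ereal (ln C' / ln (real N) + a)) sequentially"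
    using eventually_ge_at_top[of 2]
  proof eventually_elim
    case (elim N)
    have lnN: "ln (real N) > 0" using elim by simp
    have "ln \<bar>c N\<bar> \<le> ln C' + a * ln (real N)"
    proof (cases "c N = 0")
      case True
      then show ?thesis using C' lnN a by simp
    next
      case False
      have "\<bar>c N\<bar> \<le> C * real N powr a" using bound elim by simp
      also have "\<dots> \<le> C' * real N powr a" unfolding C'_def by (intro mult_right_mono) auto
      finally have "ln \<bar>c N\<bar> \<le> ln (C' * real N powr a)" using False by simp
      also have "\<dots> = ln C' + a * ln (real N)" using C' elim by (simp add: ln_mult ln_powr)
      finally show ?thesis .
    qed
    then have "ln \<bar>c N\<bar> / ln (real N) \<le> ln C' / ln (real N) + a"
      using lnN by (simp add: field_simps)
    then show ?case by simp
  qed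
  have "((\<lambda>N. ln C' / ln (real N)) \<longlongrightarrow> 0) sequentially"
    by (intro tendsto_divide_0[OF tendsto_const] filterlim_at_top_imp_at_infinity
        filterlim_compose[OF ln_at_top filterlim_real_sequentially])
  then have "((\<lambda>N. ereal (ln C' / ln (real N) + a)) \<longlongrightarrow> ereal (0 + a)) sequentially"
    by (intro tendsto_ereal tendsto_add tendsto_const)
  then have "limsup (\<lambda>N. ereal (ln C' / ln (real N) + a)) = ereal a"
    by (intro lim_imp_Limsup) auto
  with Limsup_mono[OF eventually_le] show ?thesis by simp
qed


theorem mainTheorem6:
  fixes F :: "real \<Rightarrow> real" and L :: real and i :: int and j :: nat
  assumes "L > 0"
    and "\<forall>x. F (x + L) = F x"
    and "smooth_real F"
    and "i \<ge> 1" and "j \<ge> 1"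
  shows "limsup (\<lambda>N. ereal (ln \<bar>ccoef F L N i j\<bar> / ln (real N)))
           \<le> ereal ((real j - 1) / 2)"
proof -
  obtain C where "\<forall>N\<ge>1. \<forall>i. \<bar>column F L j N i\<bar> \<le> C * real N powr ((real j - 1) / 2)"
    using grid_order_bound[OF grid_order_column[OF assms(1-3)]] by blast
  then have "\<forall>N\<ge>1. \<bar>ccoef F L N i j\<bar> \<le> C * real N powr ((real j - 1) / 2)"
    by (simp add: ccoef_def column_def)
  then show ?thesis using limsup_ln_ratio_bound assms(5) by simp
qed

end
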